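(* Let $k\ge1$ and $\epsilon$ with $0\le\epsilon\le1/2$, and assume $m^{\epsilon}\le\sqrt n$. Any deterministic coverage oracle that stores a datastructure of at most $b=nm^{1-2\epsilon}$ bits does not attain an approximation ratio of $O\!\left(\frac{m^{\epsilon-\delta}}{k\sqrt k}\right)$ for any constant $\delta>0$.
   Context: A set system with $n$ items and $m$ sets is a pair $(\mathcal X,\mathcal I)$ with $\mathcal X=\{1,\dots,n\}$ and $\mathcal I$ an indexed family of $m$ subsets of $\mathcal X$. For $k\ge1$ and a query $Q\subseteq\mathcal X$, $OPT(k,\mathcal X,\mathcal I,Q)=\max\{|(\bigcup_{S\in\mathcal J}S)\cap Q| : \mathcal J\subseteq\mathcal I,|\mathcal J|\le k\}$. A deterministic coverage oracle consists of a deterministic static stage mapping $(n,m,k,(\mathcal X,\mathcal I))$ to a bit string $\mathcal D$ (the datastructure), and a deterministic dynamic stage mapping $(\mathcal D,Q)$, for $Q\subseteq\mathcal X$, to (indices of) $\mathcal J\subseteq\mathcal I$ with $|\mathcal J|\le k$, without access to $(\mathcal X,\mathcal I)$; $\mathcal A(k,\mathcal X,\mathcal I,Q)=|(\bigcup_{S\in\mathcal J}S)\cap Q|$. The approximation ratio is $\max OPT/\mathcal A$ over all set systems with $n$ items and $m$ sets and all queries $Q$. No computational restrictions are assumed. *)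

theory Defs
  imports Complex_Main
begin

text \<open>A set system with n items and m sets: the items are 1..n and the indexed family
  is a list of length m of subsets of {1..n}; the sets are indexed by 0..<m.\<close>
definition set_system :: "nat \<Rightarrow> nat \<Rightarrow> nat set list \<Rightarrow> bool" where
  "set_system n m I \<longleftrightarrow> length I = m \<and> (\<forall>S\<in>set I. S \<subseteq> {1..n})"

definition covered :: "nat set list \<Rightarrow> nat set \<Rightarrow> nat set \<Rightarrow> nat" where
  "covered I J Q = card ((\<Union>i\<in>J. I ! i) \<inter> Q)"

definition OPT :: "nat \<Rightarrow> nat set list \<Rightarrow> nat set \<Rightarrow> nat" where
  "OPT k I Q = Max {covered I J Q | J. J \<subseteq> {..<length I} \<and> card J \<le> k}"

text \<open>A deterministic coverage oracle: a static stage mapping (n,m,k,system) to a bit string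
  and a dynamic stage mapping (datastructure, query) to a set of at most k set indices.\<close>
type_synonym static_stage = "nat \<Rightarrow> nat \<Rightarrow> nat \<Rightarrow> nat set list \<Rightarrow> bool list"
type_synonym dynamic_stage = "bool list \<Rightarrow> nat set \<Rightarrow> nat set"

definition coverage_oracle :: "nat \<Rightarrow> static_stage \<Rightarrow> dynamic_stage \<Rightarrow> bool" where
  "coverage_oracle k st dy \<longleftrightarrow>
     (\<forall>n m I Q. set_system n m I \<longrightarrow> Q \<subseteq> {1..n} \<longrightarrow>
        dy (st n m k I) Q \<subseteq> {..<m} \<and> card (dy (st n m k I) Q) \<le> k)"

definition ALG :: "static_stage \<Rightarrow> dynamic_stage \<Rightarrow> nat \<Rightarrow> nat \<Rightarrow> nat \<Rightarrow> nat set list \<Rightarrow> nat set \<Rightarrow> nat" where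
  "ALG st dy n m k I Q = covered I (dy (st n m k I) Q) Q"

text \<open>The approximation ratio (max of OPT/A over all systems with n items, m sets and all
  queries) is at most r; stated multiplicatively so that A = 0 is handled correctly.\<close>
definition ratio_at_most :: "static_stage \<Rightarrow> dynamic_stage \<Rightarrow> nat \<Rightarrow> nat \<Rightarrow> nat \<Rightarrow> real \<Rightarrow> bool" where
  "ratio_at_most st dy n m k r \<longleftrightarrow>
     (\<forall>I Q. set_system n m I \<longrightarrow> Q \<subseteq> {1..n} \<longrightarrow>
        real (OPT k I Q) \<le> r * real (ALG st dy n m k I Q))"

end

theory Submission
  imports Defs "HOL-Computational_Algebra.Polynomial" "HOL-Computational_Algebra.Primes"
    "HOL-Combinatorics.Permutations"
begin

text \<open>
  The proof is an incompressibility argument.  Suppose the static stage stores at most L bits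
  and the oracle has approximation ratio r.  We use a packing: m sets F 0, ..., F (m-1) of
  s items each, any two sharing at most d items.  For each permutation sigma of {0..<m} the
  set system listing F (sigma 0), ..., F (sigma (m-1)) is stored; on query F c the oracle must
  return the index inv sigma c whenever r * k * d < s, because every other index covers at most
  d query items.  So the datastructure determines sigma up to k^m choices, and
  m! <= 2^(L+1) * k^m.

  The packing consists of graphs of polynomials of degree below d over the prime field of
  order p, placed in a p x p grid of n = p * p items: by Lagrange's root bound two distinct
  graphs meet in at most d points, and there are p^d >= m of them.  Choosing
  m = floor(p^(1/eps)) makes the storage budget n * m^(1 - 2 eps) at most m bits, while
  the ratio C * m^(eps - delta) / (k * sqrt k) stays below p / (k * d).  When eps < delta the
  claimed ratio is eventually below 1, which no oracle achieves.
\<close>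

lemma covered_le_OPT:
  assumes "J \<subseteq> {..<length I}" and "card J \<le> k"
  shows "covered I J Q \<le> OPT k I Q"
  unfolding OPT_def
proof (rule Max_ge)
  have "{covered I J Q |J. J \<subseteq> {..<length I} \<and> card J \<le> k} \<subseteq> (\<lambda>J. covered I J Q) ` Pow {..<length I}"
    by auto
  then show "finite {covered I J Q |J. J \<subseteq> {..<length I} \<and> card J \<le> k}"
    by (rule finite_subset) auto
  show "covered I J Q \<in> {covered I J Q |J. J \<subseteq> {..<length I} \<and> card J \<le> k}"
    using assms by blast
qed

lemma oracle_answer:
  assumes "coverage_oracle k st dy" and "set_system n m I" and "Q \<subseteq> {1..n}"
  shows "dy (st n m k I) Q \<subseteq> {..<m}" and "card (dy (st n m k I) Q) \<le> k"
  using assms unfolding coverage_oracle_def by blast+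

lemma ALG_le_OPT:
  assumes "coverage_oracle k st dy" and "set_system n m I" and "Q \<subseteq> {1..n}"
  shows "ALG st dy n m k I Q \<le> OPT k I Q"
  using oracle_answer[OF assms] assms(2) unfolding ALG_def set_system_def
  by (intro covered_le_OPT) auto

text \<open>A ratio below 1 is never attained: on the system whose sets are all equal to {1..n}
  and the query {1}, the oracle covers at most OPT >= 1 items, while ratio r < 1 would
  demand strictly more.\<close>
lemma no_ratio_below_one:
  assumes adm: "coverage_oracle k st dy" and "k \<ge> 1" and "n \<ge> 1" and "m \<ge> 1"
    and "r < 1"
  shows "\<not> ratio_at_most st dy n m k r"
proof
  assume ratio: "ratio_at_most st dy n m k r"
  define I where "I = replicate m {1..n}"
  have sys: "set_system n m I" and Q: "{1} \<subseteq> {1..n}"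
    using \<open>n \<ge> 1\<close> unfolding set_system_def I_def by auto
  have "covered I {0} {1} = 1"
    using \<open>n \<ge> 1\<close> \<open>m \<ge> 1\<close> unfolding covered_def I_def by simp
  moreover have "covered I {0} {1} \<le> OPT k I {1}"
    using \<open>k \<ge> 1\<close> \<open>m \<ge> 1\<close> by (intro covered_le_OPT) (auto simp: I_def)
  ultimately have opt_pos: "OPT k I {1} \<ge> 1" by simp
  have alg_le: "ALG st dy n m k I {1} \<le> OPT k I {1}"
    by (rule ALG_le_OPT[OF adm sys Q])
  have "real (OPT k I {1}) \<le> r * real (ALG st dy n m k I {1})"
    using ratio sys Q unfolding ratio_at_most_def by blast
  also have "\<dots> < real (OPT k I {1})"
  proof (cases "r \<le> 0")
    case True
    then have "r * real (ALG st dy n m k I {1}) \<le> 0" by (simp add: mult_nonpos_nonneg)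
    then show ?thesis using opt_pos by linarith
  next
    case False
    then have "r * real (ALG st dy n m k I {1}) \<le> r * real (OPT k I {1})"
      using alg_le by simp
    also have "\<dots> < real (OPT k I {1})" using False \<open>r < 1\<close> opt_pos by simp
    finally show ?thesis .
  qed
  finally show False by simp
qed

text \<open>If the set with index j has s items
  and meets every other set in at most d items, then on query I ! j any answer avoiding j
  covers at most k * d items; so if r * k * d < s the oracle is forced to return j.\<close>
lemma oracle_returns_query_set:
  assumes adm: "coverage_oracle k st dy" and "k \<ge> 1" and sys: "set_system n m I"
    and j: "j < m" and size: "card (I ! j) = s"
    and overlap: "\<And>i. i < m \<Longrightarrow> i \<noteq> j \<Longrightarrow> card (I ! i \<inter> I ! j) \<le> d"
    and ratio: "ratio_at_most st dy n m k r" and "0 \<le> r" and "r * real (k * d) < real s"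
  shows "j \<in> dy (st n m k I) (I ! j)"
proof (rule ccontr)
  define J where "J = dy (st n m k I) (I ! j)"
  assume "j \<notin> dy (st n m k I) (I ! j)"
  then have j_notin: "j \<notin> J" unfolding J_def .
  have Q: "I ! j \<subseteq> {1..n}" using sys j by (auto simp: set_system_def)
  have J: "J \<subseteq> {..<m}" "card J \<le> k"
    using oracle_answer[OF adm sys Q] unfolding J_def by auto
  have "covered I {j} (I ! j) = s" using size by (simp add: covered_def)
  moreover have "covered I {j} (I ! j) \<le> OPT k I (I ! j)"
    using j sys \<open>k \<ge> 1\<close> by (intro covered_le_OPT) (auto simp: set_system_def)
  ultimately have opt: "s \<le> OPT k I (I ! j)" by simp
  have "ALG st dy n m k I (I ! j) = card (\<Union>i\<in>J. I ! i \<inter> I ! j)"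
    unfolding ALG_def covered_def J_def by (simp add: Int_UN_distrib2)
  also have "\<dots> \<le> (\<Sum>i\<in>J. card (I ! i \<inter> I ! j))"
    using J(1) finite_subset by (intro card_UN_le) blast
  also have "\<dots> \<le> (\<Sum>i\<in>J. d)"
    using J(1) j_notin by (intro sum_mono overlap) auto
  also have "\<dots> \<le> k * d" using J(2) by simp
  finally have alg: "ALG st dy n m k I (I ! j) \<le> k * d" .
  have "real s \<le> r * real (ALG st dy n m k I (I ! j))"
    using ratio sys Q opt unfolding ratio_at_most_def by (meson of_nat_le_iff order_trans)
  also have "\<dots> \<le> r * real (k * d)"
    using alg \<open>0 \<le> r\<close> by (metis mult_left_mono of_nat_le_iff)
  finally show False using \<open>r * real (k * d) < real s\<close> by simp
qed

text \<open>If the code of a permutation sigma determines, for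
  each position c, a set of at most k candidates containing inv sigma c, then at most k^m
  permutations share any given code: sigma is determined by the vector of the inv sigma c.\<close>
lemma permutation_fibre_bound:
  fixes code :: "(nat \<Rightarrow> nat) \<Rightarrow> 'c" and A :: "'c \<Rightarrow> nat \<Rightarrow> nat set"
  assumes decode: "\<And>\<sigma> c. \<sigma> permutes {..<m} \<Longrightarrow> c < m \<Longrightarrow> inv \<sigma> c \<in> A (code \<sigma>) c"
    and few: "\<And>\<sigma> c. \<sigma> permutes {..<m} \<Longrightarrow> c < m \<Longrightarrow> finite (A (code \<sigma>) c) \<and> card (A (code \<sigma>) c) \<le> k"
  shows "card {\<sigma>. \<sigma> permutes {..<m} \<and> code \<sigma> = D} \<le> k ^ m"
proof (cases "\<exists>\<sigma>. \<sigma> permutes {..<m} \<and> code \<sigma> = D")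
  case False
  then have "{\<sigma>. \<sigma> permutes {..<m} \<and> code \<sigma> = D} = {}" by auto
  then show ?thesis by (metis card.empty le0)
next
  case True
  then obtain \<sigma>\<^sub>0 where \<sigma>\<^sub>0: "\<sigma>\<^sub>0 permutes {..<m}" "code \<sigma>\<^sub>0 = D" by blast
  define fibre where "fibre = {\<sigma>. \<sigma> permutes {..<m} \<and> code \<sigma> = D}"
  define decoded where "decoded \<sigma> = restrict (inv \<sigma>) {..<m}" for \<sigma> :: "nat \<Rightarrow> nat"
  have "inj_on decoded fibre"
  proof (rule inj_onI)
    fix \<sigma> \<tau> assume "\<sigma> \<in> fibre" "\<tau> \<in> fibre" and eq: "decoded \<sigma> = decoded \<tau>"
    then have perm: "inv \<sigma> permutes {..<m}" "inv \<tau> permutes {..<m}"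
      by (auto simp: fibre_def permutes_inv)
    have "inv \<sigma> x = inv \<tau> x" for x
      using fun_cong[OF eq, of x] permutes_not_in[OF perm(1)] permutes_not_in[OF perm(2)]
      by (cases "x < m") (auto simp: decoded_def)
    then have "inv \<sigma> = inv \<tau>" by blast
    with \<open>\<sigma> \<in> fibre\<close> \<open>\<tau> \<in> fibre\<close> show "\<sigma> = \<tau>"
      unfolding fibre_def by (metis mem_Collect_eq permutes_inv_inv)
  qed
  moreover have "decoded ` fibre \<subseteq> PiE {..<m} (A D)"
    using decode by (auto simp: image_subset_iff fibre_def decoded_def Pi_iff)
  moreover have "finite (PiE {..<m} (A D))"
    using few \<sigma>\<^sub>0 by (intro finite_PiE) auto
  ultimately have "card fibre \<le> card (PiE {..<m} (A D))"
    by (metis card_image card_mono)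
  also have "\<dots> = (\<Prod>c<m. card (A D c))" by (simp add: card_PiE)
  also have "\<dots> \<le> (\<Prod>c<m. k)" using few \<sigma>\<^sub>0 by (intro prod_mono) auto
  finally show ?thesis by (simp add: fibre_def)
qed

lemma permutation_code_bound:
  fixes code :: "(nat \<Rightarrow> nat) \<Rightarrow> 'c" and A :: "'c \<Rightarrow> nat \<Rightarrow> nat set"
  assumes "finite Codes" and codes: "\<And>\<sigma>. \<sigma> permutes {..<m} \<Longrightarrow> code \<sigma> \<in> Codes"
    and decode: "\<And>\<sigma> c. \<sigma> permutes {..<m} \<Longrightarrow> c < m \<Longrightarrow> inv \<sigma> c \<in> A (code \<sigma>) c"
    and few: "\<And>\<sigma> c. \<sigma> permutes {..<m} \<Longrightarrow> c < m \<Longrightarrow> finite (A (code \<sigma>) c) \<and> card (A (code \<sigma>) c) \<le> k"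
  shows "fact m \<le> card Codes * k ^ m"
proof -
  define fibre where "fibre D = {\<sigma>. \<sigma> permutes {..<m} \<and> code \<sigma> = D}" for D
  have "{\<sigma>. \<sigma> permutes {..<m}} = (\<Union>D\<in>Codes. fibre D)"
    using codes by (auto simp: fibre_def)
  then have "fact m = card (\<Union>D\<in>Codes. fibre D)"
    by (metis card_permutations card_lessThan finite_lessThan)
  also have "\<dots> \<le> (\<Sum>D\<in>Codes. card (fibre D))" by (rule card_UN_le[OF \<open>finite Codes\<close>])
  also have "\<dots> \<le> (\<Sum>D\<in>Codes. k ^ m)"
    unfolding fibre_def by (intro sum_mono permutation_fibre_bound[OF decode few])
  finally show ?thesis by simp
qed

lemma card_bounded_bool_lists: "card {xs :: bool list. length xs \<le> L} < 2 ^ (L + 1)"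
proof -
  have "card {xs :: bool list. length xs \<le> L} = (\<Sum>i\<le>L. 2 ^ i)"
    using card_lists_length_le[of "UNIV :: bool set" L] by simp
  also have "\<dots> < 2 ^ (L + 1)" by (induction L) auto
  finally show ?thesis .
qed

text \<open>If the oracle had ratio r with r * k * d < s, its
  datastructure would determine each inv sigma c up to the k indices returned on query F c;
  hence m! <= 2^(L+1) * k^m, contradicting the hypothesis on the storage bound L.\<close>
lemma packing_lower_bound:
  fixes F :: "nat \<Rightarrow> nat set"
  assumes adm: "coverage_oracle k st dy" and "k \<ge> 1"
    and F_items: "\<And>c. c < m \<Longrightarrow> F c \<subseteq> {1..n}"
    and F_size: "\<And>c. c < m \<Longrightarrow> card (F c) = s"
    and F_overlap: "\<And>c c'. c < m \<Longrightarrow> c' < m \<Longrightarrow> c \<noteq> c' \<Longrightarrow> card (F c \<inter> F c') \<le> d"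
    and storage: "\<And>I. set_system n m I \<Longrightarrow> length (st n m k I) \<le> L"
    and too_many: "2 ^ (L + 1) * k ^ m < fact m"
    and r_nonneg: "0 \<le> r" and r_small: "r * real (k * d) < real s"
  shows "\<not> ratio_at_most st dy n m k r"
proof
  assume ratio: "ratio_at_most st dy n m k r"
  define Sys where "Sys \<sigma> = map (\<lambda>j. F (\<sigma> j)) [0..<m]" for \<sigma> :: "nat \<Rightarrow> nat"
  have Sys_nth: "j < m \<Longrightarrow> Sys \<sigma> ! j = F (\<sigma> j)" for \<sigma> j by (simp add: Sys_def)
  have sys: "set_system n m (Sys \<sigma>)" if "\<sigma> permutes {..<m}" for \<sigma>
    using F_items permutes_in_image[OF that] by (auto simp: set_system_def Sys_def)
  have decode: "inv \<sigma> c \<in> dy (st n m k (Sys \<sigma>)) (F c)"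
    if \<sigma>: "\<sigma> permutes {..<m}" and c: "c < m" for \<sigma> c
  proof -
    have j: "inv \<sigma> c < m" and \<sigma>j: "\<sigma> (inv \<sigma> c) = c"
      using c permutes_in_image[OF permutes_inv[OF \<sigma>]] permutes_inverses(1)[OF \<sigma>] by auto
    have "card (Sys \<sigma> ! i \<inter> Sys \<sigma> ! inv \<sigma> c) \<le> d" if "i < m" "i \<noteq> inv \<sigma> c" for i
    proof -
      have "\<sigma> i \<noteq> c" using that(2) permutes_inverses(2)[OF \<sigma>] by metis
      then show ?thesis
        using that(1) j \<sigma>j c permutes_in_image[OF \<sigma>] by (simp add: Sys_nth F_overlap)
    qed
    moreover have "card (Sys \<sigma> ! inv \<sigma> c) = s" using F_size[OF c] by (simp add: Sys_nth[OF j] \<sigma>j)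
    ultimately have "inv \<sigma> c \<in> dy (st n m k (Sys \<sigma>)) (Sys \<sigma> ! inv \<sigma> c)"
      using oracle_returns_query_set[OF adm \<open>k \<ge> 1\<close> sys[OF \<sigma>] j _ _ ratio r_nonneg r_small] by blast
    then show ?thesis by (simp add: Sys_nth[OF j] \<sigma>j)
  qed
  have "fact m \<le> card {xs :: bool list. length xs \<le> L} * k ^ m"
  proof (rule permutation_code_bound[where code = "\<lambda>\<sigma>. st n m k (Sys \<sigma>)"])
    show "finite {xs :: bool list. length xs \<le> L}"
      using finite_lists_length_le[of "UNIV :: bool set" L] by simp
    show "st n m k (Sys \<sigma>) \<in> {xs. length xs \<le> L}" if "\<sigma> permutes {..<m}" for \<sigma>
      using storage[OF sys[OF that]] by simp
    show "inv \<sigma> c \<in> dy (st n m k (Sys \<sigma>)) (F c)" if "\<sigma> permutes {..<m}" "c < m" for \<sigma> c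
      using decode[OF that] .
    show "finite (dy (st n m k (Sys \<sigma>)) (F c)) \<and> card (dy (st n m k (Sys \<sigma>)) (F c)) \<le> k"
      if "\<sigma> permutes {..<m}" "c < m" for \<sigma> c
      using oracle_answer[OF adm sys[OF that(1)] F_items[OF that(2)]] finite_subset by blast
  qed
  also have "\<dots> < 2 ^ (L + 1) * k ^ m"
    using card_bounded_bool_lists[of L] \<open>k \<ge> 1\<close> by simp
  finally show False using too_many by simp
qed

lemma eq_if_dvd_diff_small:
  fixes a b p :: nat
  assumes "a < p" and "b < p" and "int p dvd int a - int b"
  shows "a = b"
proof -
  have "int (a mod p) = int (b mod p)"
    using assms(3) by (simp add: of_nat_mod mod_eq_dvd_iff)
  then show ?thesis using assms(1,2) by simp
qed

lemma card_roots_mod_prime: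
  fixes f :: "int poly"
  assumes "prime p" and "\<not> [:int p:] dvd f"
  shows "card {x \<in> {..<p}. int p dvd poly f (int x)} \<le> degree f"
  using assms(2)
proof (induction "degree f" arbitrary: f)
  case 0
  then obtain c where f: "f = [:c:]" by (metis degree_eq_zeroE)
  with 0 have "{x \<in> {..<p}. int p dvd poly f (int x)} = {}" by auto
  then show ?case by (metis card.empty le0)
next
  case (Suc d f)
  define roots where "roots h = {x \<in> {..<p}. int p dvd poly h (int x)}" for h :: "int poly"
  show ?case
  proof (cases "roots f = {}")
    case True
    then show ?thesis unfolding roots_def by (metis card.empty le0)
  next
    case False
    then obtain r where r: "r < p" "int p dvd poly f (int r)" by (auto simp: roots_def)
    define g where "g = synthetic_div f (int r)"
    have f_eq: "f = [:- int r, 1:] * g + [:poly f (int r):]"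
      unfolding g_def by (rule synthetic_div_correct'[symmetric])
    have "degree g = d" using Suc(2) by (simp add: g_def degree_synthetic_div)
    moreover have "\<not> [:int p:] dvd g"
    proof
      assume "[:int p:] dvd g"
      moreover have "[:int p:] dvd [:poly f (int r):]" using r(2) by simp
      ultimately have "[:int p:] dvd f" by (subst f_eq) (intro dvd_add dvd_mult)
      then show False using Suc(3) by simp
    qed
    ultimately have IH: "card (roots g) \<le> d" using Suc(1) unfolding roots_def by blast
    have "roots f \<subseteq> insert r (roots g)"
    proof
      fix x assume x: "x \<in> roots f"
      have "poly f (int x) = (int x - int r) * poly g (int x) + poly f (int r)"
        by (subst f_eq) (simp add: algebra_simps)
      then have "int p dvd (int x - int r) * poly g (int x)"
        using x r(2) by (simp add: roots_def dvd_add_left_iff)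
      then have "int p dvd int x - int r \<or> int p dvd poly g (int x)"
        using \<open>prime p\<close> by (simp add: prime_dvd_mult_iff)
      then show "x \<in> insert r (roots g)"
        using x r(1) eq_if_dvd_diff_small[of x p r] by (auto simp: roots_def)
    qed
    then have "card (roots f) \<le> card (insert r (roots g))"
      by (intro card_mono) (auto simp: roots_def)
    also have "\<dots> \<le> Suc d" using IH by (simp add: card_insert_if roots_def)
    finally show ?thesis using Suc(2) by (simp add: roots_def)
  qed
qed

lemma eq_mod_power_if_digits_eq:
  fixes c c' p :: nat
  assumes "\<forall>i<d. c div p ^ i mod p = c' div p ^ i mod p"
  shows "c mod p ^ d = c' mod p ^ d"
  using assms
proof (induction d)
  case (Suc d)
  have "x mod p ^ Suc d = p ^ d * (x div p ^ d mod p) + x mod p ^ d" for x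
    by (metis power_Suc2 mod_mult2_eq)
  then show ?case using Suc by simp
qed simp

definition grid_item :: "nat \<Rightarrow> nat \<Rightarrow> nat \<Rightarrow> nat" where
  "grid_item p x y = 1 + x * p + y"

text \<open>The value at x of the polynomial whose i-th coefficient is the i-th base-p digit of c,
  for the d lowest digits.\<close>
definition digit_poly :: "nat \<Rightarrow> nat \<Rightarrow> nat \<Rightarrow> nat \<Rightarrow> nat" where
  "digit_poly p d c x = (\<Sum>i<d. (c div p ^ i mod p) * x ^ i)"

text \<open>The graph of that polynomial modulo p, as a set of grid items.  These sets are the
  packing of the construction: p items each, and any two meet in at most d items.\<close>
definition poly_graph :: "nat \<Rightarrow> nat \<Rightarrow> nat \<Rightarrow> nat set" where
  "poly_graph p d c = (\<lambda>x. grid_item p x (digit_poly p d c x mod p)) ` {..<p}"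

lemma grid_item_inj:
  assumes "y < p" and "y' < p" and "grid_item p x y = grid_item p x' y'"
  shows "x = x' \<and> y = y'"
proof -
  have "x * p + y = x' * p + y'" using assms(3) by (simp add: grid_item_def)
  then have "(x * p + y) div p = (x' * p + y') div p" and "(x * p + y) mod p = (x' * p + y') mod p"
    by simp_all
  then show ?thesis using assms(1,2) by simp
qed

lemma poly_graph_items:
  assumes "0 < p"
  shows "poly_graph p d c \<subseteq> {1..p * p}"
proof
  fix z assume "z \<in> poly_graph p d c"
  then obtain x where x: "x < p" and z: "z = grid_item p x (digit_poly p d c x mod p)"
    by (auto simp: poly_graph_def)
  have "x * p + digit_poly p d c x mod p < (x + 1) * p" using assms by simp
  also have "\<dots> \<le> p * p" using x by (intro mult_right_mono) auto
  finally show "z \<in> {1..p * p}" by (simp add: z grid_item_def)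
qed

text \<open>A graph has one point in each column, hence exactly p items.\<close>
lemma card_poly_graph:
  assumes "0 < p"
  shows "card (poly_graph p d c) = p"
  unfolding poly_graph_def using assms
  by (subst card_image) (auto simp: inj_on_def dest: grid_item_inj[rotated 2])

lemma digit_poly_difference:
  fixes p d c c' :: nat
  assumes "0 < p" and "c < p ^ d" and "c' < p ^ d" and "c \<noteq> c'"
  obtains F :: "int poly" where "degree F \<le> d" and "\<not> [:int p:] dvd F"
    and "\<And>x. poly F (int x) = int (digit_poly p d c x) - int (digit_poly p d c' x)"
proof
  define F :: "int poly"
    where "F = (\<Sum>i<d. monom (int (c div p ^ i mod p) - int (c' div p ^ i mod p)) i)"
  show "poly F (int x) = int (digit_poly p d c x) - int (digit_poly p d c' x)" for x
    unfolding F_def digit_poly_def by (simp add: poly_sum poly_monom sum_subtractf algebra_simps)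
  show "degree F \<le> d" unfolding F_def
    by (rule degree_sum_le) (auto intro: order.trans[OF degree_monom_le])
  show "\<not> [:int p:] dvd F"
  proof
    assume "[:int p:] dvd F"
    then have dvd_coeff: "int p dvd coeff F i" for i by (simp add: const_poly_dvd_iff)
    have "c div p ^ i mod p = c' div p ^ i mod p" if "i < d" for i
      using that \<open>0 < p\<close> dvd_coeff[of i]
      by (intro eq_if_dvd_diff_small[where p = p]) (simp_all add: F_def coeff_sum coeff_monom)
    then have "c mod p ^ d = c' mod p ^ d" by (intro eq_mod_power_if_digits_eq) blast
    then show False using assms(2-4) by simp
  qed
qed

text \<open>Two distinct graphs meet only above the roots modulo p of the difference polynomial,
  hence in at most d points.\<close>
lemma card_poly_graph_inter:
  assumes "prime p" and "c < p ^ d" and "c' < p ^ d" and "c \<noteq> c'"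
  shows "card (poly_graph p d c \<inter> poly_graph p d c') \<le> d"
proof -
  have "0 < p" using \<open>prime p\<close> by (simp add: prime_gt_0_nat)
  then obtain F where "degree F \<le> d" and F_ndvd: "\<not> [:int p:] dvd F"
    and F_poly: "\<And>x. poly F (int x) = int (digit_poly p d c x) - int (digit_poly p d c' x)"
    using digit_poly_difference[OF _ assms(2-4)] by blast
  define roots where "roots = {x \<in> {..<p}. int p dvd poly F (int x)}"
  have "finite roots" by (simp add: roots_def)
  have "poly_graph p d c \<inter> poly_graph p d c'
      \<subseteq> (\<lambda>x. grid_item p x (digit_poly p d c x mod p)) ` roots"
  proof
    fix z assume "z \<in> poly_graph p d c \<inter> poly_graph p d c'"
    then obtain x x' where x: "x < p" "z = grid_item p x (digit_poly p d c x mod p)"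
      and "x' < p" "z = grid_item p x' (digit_poly p d c' x' mod p)"
      by (auto simp: poly_graph_def)
    then have "x = x' \<and> digit_poly p d c x mod p = digit_poly p d c' x' mod p"
      using \<open>0 < p\<close> by (intro grid_item_inj[of _ p]) auto
    then have "digit_poly p d c x mod p = digit_poly p d c' x mod p" by auto
    then have "int p dvd poly F (int x)"
      by (simp add: F_poly flip: mod_eq_dvd_iff of_nat_mod)
    then show "z \<in> (\<lambda>x. grid_item p x (digit_poly p d c x mod p)) ` roots"
      using x by (auto simp: roots_def)
  qed
  then have "card (poly_graph p d c \<inter> poly_graph p d c')
      \<le> card ((\<lambda>x. grid_item p x (digit_poly p d c x mod p)) ` roots)"
    using \<open>finite roots\<close> by (intro card_mono) auto
  also have "\<dots> \<le> card roots" using \<open>finite roots\<close> by (rule card_image_le)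
  also have "\<dots> \<le> degree F"
    unfolding roots_def by (rule card_roots_mod_prime[OF \<open>prime p\<close> F_ndvd])
  finally show ?thesis using \<open>degree F \<le> d\<close> by linarith
qed

text \<open>The factorial eventually dominates every exponential (the exponential series converges).\<close>
lemma exponential_less_fact:
  fixes a :: nat
  obtains M where "\<And>m. m \<ge> M \<Longrightarrow> 2 * a ^ m < fact m"
proof -
  have "(\<lambda>m. inverse (fact m) * real a ^ m) \<longlonglongrightarrow> 0"
    by (rule summable_LIMSEQ_zero[OF summable_exp])
  then have "eventually (\<lambda>m. inverse (fact m) * real a ^ m < 1 / 2) sequentially"
    by (rule order_tendstoD) simp
  then obtain M where M: "\<And>m. m \<ge> M \<Longrightarrow> inverse (fact m) * real a ^ m < 1 / 2"
    by (auto simp: eventually_sequentially)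
  have "2 * a ^ m < fact m" if "m \<ge> M" for m
  proof -
    have "real (2 * a ^ m) < real (fact m)"
      using M[OF that] by (simp add: field_simps)
    then show ?thesis by (simp only: of_nat_less_iff)
  qed
  then show ?thesis using that by blast
qed

lemma floor_root_powr_le:
  fixes p :: nat and \<epsilon> \<gamma> :: real
  assumes "0 < \<epsilon>" and "0 \<le> \<gamma>"
  shows "real (nat \<lfloor>real p powr (1 / \<epsilon>)\<rfloor>) powr \<gamma> \<le> real p powr (\<gamma> / \<epsilon>)"
proof -
  have "real (nat \<lfloor>real p powr (1 / \<epsilon>)\<rfloor>) \<le> real p powr (1 / \<epsilon>)" by simp
  then have "real (nat \<lfloor>real p powr (1 / \<epsilon>)\<rfloor>) powr \<gamma> \<le> (real p powr (1 / \<epsilon>)) powr \<gamma>"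
    using assms(2) by (intro powr_mono2) auto
  also have "\<dots> = real p powr (\<gamma> / \<epsilon>)" by (simp add: powr_powr)
  finally show ?thesis .
qed

text \<open>With this choice, the storage budget n * m^(1 - 2 eps) is at most p^(1/eps) < m + 1 bits,
  i.e. at most m bits.\<close>
lemma grid_storage_bound:
  fixes p :: nat and \<epsilon> :: real
  assumes "0 < \<epsilon>" and "\<epsilon> \<le> 1 / 2"
  defines "m \<equiv> nat \<lfloor>real p powr (1 / \<epsilon>)\<rfloor>"
  shows "real (p * p) * real m powr (1 - 2 * \<epsilon>) < real m + 1"
proof -
  have "real (p * p) * real m powr (1 - 2 * \<epsilon>) \<le> real p powr 2 * real p powr ((1 - 2 * \<epsilon>) / \<epsilon>)"
    unfolding m_def using assms(1,2) floor_root_powr_le[of \<epsilon> "1 - 2 * \<epsilon>" p]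
    by (intro mult_mono) (auto simp: power2_eq_square simp flip: powr_realpow powr_add)
  also have "\<dots> = real p powr (2 + (1 - 2 * \<epsilon>) / \<epsilon>)" by (rule powr_add[symmetric])
  also have "\<dots> = real p powr (1 / \<epsilon>)"
    using assms(1) by (simp add: add_divide_distrib diff_divide_distrib)
  also have "\<dots> < real m + 1" unfolding m_def by linarith
  finally show ?thesis .
qed

text \<open>The ratio of the theorem stays below the threshold p / (k * d) of the packing argument
  once p is large: it is at most C * d * m^(eps - delta) <= C * d * p^(1 - delta/eps) < p.\<close>
lemma ratio_below_threshold:
  fixes p m d k :: nat and \<epsilon> \<delta> C :: real
  assumes "0 < \<delta>" and "\<delta> \<le> \<epsilon>" and "0 < C" and "k \<ge> 1" and "d > 0"
    and p_large: "(C * real d) powr (\<epsilon> / \<delta>) < real p"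
    and m_small: "real m powr (\<epsilon> - \<delta>) \<le> real p powr ((\<epsilon> - \<delta>) / \<epsilon>)"
  shows "C * real m powr (\<epsilon> - \<delta>) / (real k * sqrt (real k)) * real (k * d) < real p"
proof -
  have Cd: "0 < C * real d" using assms(3,5) by simp
  have p_pos: "0 < real p" using p_large powr_ge_zero[of "C * real d" "\<epsilon> / \<delta>"] by linarith
  have "C * real m powr (\<epsilon> - \<delta>) / (real k * sqrt (real k)) * real (k * d)
      = C * real d * real m powr (\<epsilon> - \<delta>) / sqrt (real k)"
    using assms(4) by simp
  also have "\<dots> \<le> C * real d * real m powr (\<epsilon> - \<delta>)"
    using assms(4) Cd by (simp add: divide_le_eq mult_le_cancel_left1 less_le_not_le)
  also have "\<dots> \<le> C * real d * real p powr ((\<epsilon> - \<delta>) / \<epsilon>)"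
    using m_small Cd by (intro mult_left_mono) auto
  also have "\<dots> < real p powr (\<delta> / \<epsilon>) * real p powr ((\<epsilon> - \<delta>) / \<epsilon>)"
  proof (intro mult_strict_right_mono)
    have "C * real d = ((C * real d) powr (\<epsilon> / \<delta>)) powr (\<delta> / \<epsilon>)"
      using Cd assms(1,2) by (simp add: powr_powr)
    also have "\<dots> < real p powr (\<delta> / \<epsilon>)"
      using p_large assms(1,2) by (intro powr_less_mono2) auto
    finally show "C * real d < real p powr (\<delta> / \<epsilon>)" .
    show "0 < real p powr ((\<epsilon> - \<delta>) / \<epsilon>)" using p_pos by simp
  qed
  also have "\<dots> = real p powr (\<delta> / \<epsilon> + (\<epsilon> - \<delta>) / \<epsilon>)" by (rule powr_add[symmetric])
  also have "\<dots> = real p"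
    using assms(1,2) p_pos by (simp add: add_divide_distrib diff_divide_distrib)
  finally show ?thesis .
qed

text \<open>If eps < delta, the ratio of the theorem tends to 0 as m grows, and ratios below 1 are
  never attained.\<close>
lemma small_ratio_case:
  fixes k :: nat and \<epsilon> \<delta> C :: real and N :: nat
  assumes "k \<ge> 1" and "0 \<le> \<epsilon>" and "\<epsilon> \<le> 1/2" and "\<epsilon> < \<delta>" and "C > 0"
    and adm: "coverage_oracle k st dy"
  shows "\<exists>n m. m \<ge> N \<and> real m powr \<epsilon> \<le> sqrt (real n) \<and>
           \<not> ratio_at_most st dy n m k (C * real m powr (\<epsilon> - \<delta>) / (real k * sqrt (real k)))"
proof -
  have "(\<lambda>m. C * real m powr (\<epsilon> - \<delta>)) \<longlonglongrightarrow> C * 0"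
    using \<open>\<epsilon> < \<delta>\<close> by (intro tendsto_mult tendsto_const tendsto_neg_powr filterlim_real_sequentially) simp
  then have "eventually (\<lambda>m. C * real m powr (\<epsilon> - \<delta>) < 1) sequentially"
    by (rule order_tendstoD) simp
  then obtain M where M: "\<And>m. m \<ge> M \<Longrightarrow> C * real m powr (\<epsilon> - \<delta>) < 1"
    by (auto simp: eventually_sequentially)
  define m where "m = max M (max N 1)"
  have m: "m \<ge> N" "m \<ge> 1" and small: "C * real m powr (\<epsilon> - \<delta>) < 1"
    using M by (simp_all add: m_def)
  have "1 \<le> real k * sqrt (real k)"
    using \<open>k \<ge> 1\<close> mult_mono[of 1 "real k" 1 "sqrt (real k)"] by simp
  then have "C * real m powr (\<epsilon> - \<delta>) / (real k * sqrt (real k)) \<le> C * real m powr (\<epsilon> - \<delta>)"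
    using \<open>C > 0\<close> by (simp add: divide_le_eq mult_le_cancel_left1 less_le_not_le)
  then have "\<not> ratio_at_most st dy m m k (C * real m powr (\<epsilon> - \<delta>) / (real k * sqrt (real k)))"
    using m small by (intro no_ratio_below_one[OF adm \<open>k \<ge> 1\<close>]) auto
  moreover have "real m powr \<epsilon> \<le> sqrt (real m)"
  proof -
    have "real m powr \<epsilon> \<le> real m powr (1/2)" using m \<open>\<epsilon> \<le> 1/2\<close> by (intro powr_mono) auto
    then show ?thesis by (simp add: powr_half_sqrt)
  qed
  ultimately show ?thesis using m by auto
qed

text \<open>If 0 < delta <= eps, take d = ceil(1/eps), a large prime p, n = p * p and
  m = floor(p^(1/eps)) <= p^d, and apply the packing argument to the polynomial graphs
  of degree below d.\<close>
lemma large_ratio_case: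
  fixes k :: nat and \<epsilon> \<delta> C :: real and N :: nat
  assumes "k \<ge> 1" and "0 < \<epsilon>" and "\<epsilon> \<le> 1/2" and "0 < \<delta>" and "\<delta> \<le> \<epsilon>" and "C > 0"
    and adm: "coverage_oracle k st dy"
    and storage: "\<forall>n m I. set_system n m I \<longrightarrow> real m powr \<epsilon> \<le> sqrt (real n) \<longrightarrow>
           real (length (st n m k I)) \<le> real n * real m powr (1 - 2 * \<epsilon>)"
  shows "\<exists>n m. m \<ge> N \<and> real m powr \<epsilon> \<le> sqrt (real n) \<and>
           \<not> ratio_at_most st dy n m k (C * real m powr (\<epsilon> - \<delta>) / (real k * sqrt (real k)))"
proof -
  define d where "d = nat \<lceil>1 / \<epsilon>\<rceil>"
  have "1 / \<epsilon> \<ge> 2" using assms(2,3) by (simp add: field_simps)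
  then have d: "1 / \<epsilon> \<le> real d" "d > 0" unfolding d_def by linarith+
  obtain M where M: "\<And>m. m \<ge> M \<Longrightarrow> 2 * (2 * k) ^ m < fact m"
    using exponential_less_fact by blast
  obtain p where "prime p" and p_large: "p > N + M + nat \<lceil>(C * real d) powr (\<epsilon> / \<delta>)\<rceil>"
    using bigger_prime by blast
  then have p_pos: "0 < p" and p_threshold: "(C * real d) powr (\<epsilon> / \<delta>) < real p"
    by (simp_all add: prime_gt_0_nat) linarith
  define m where "m = nat \<lfloor>real p powr (1 / \<epsilon>)\<rfloor>"
  have "real p = real p powr 1" using p_pos by simp
  also have "\<dots> \<le> real p powr (1 / \<epsilon>)" using \<open>1 / \<epsilon> \<ge> 2\<close> p_pos by (intro powr_mono) auto
  finally have "p \<le> m" unfolding m_def by (rule le_nat_floor)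
  have root: "real m powr \<epsilon> \<le> sqrt (real (p * p))"
    using floor_root_powr_le[of \<epsilon> \<epsilon> p] assms(2) by (simp add: m_def)
  have "real m \<le> real p powr (1 / \<epsilon>)" by (simp add: m_def)
  also have "\<dots> \<le> real p powr real d" using d(1) p_pos by (intro powr_mono) auto
  finally have "m \<le> p ^ d" using p_pos by (simp add: powr_realpow flip: of_nat_power)
  have "\<not> ratio_at_most st dy (p * p) m k (C * real m powr (\<epsilon> - \<delta>) / (real k * sqrt (real k)))"
  proof (rule packing_lower_bound[where F = "poly_graph p d" and s = p and d = d and L = m])
    show "coverage_oracle k st dy" "k \<ge> 1" by fact+
    show "poly_graph p d c \<subseteq> {1..p * p}" for c using p_pos by (rule poly_graph_items)
    show "card (poly_graph p d c) = p" for c using p_pos by (rule card_poly_graph)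
    show "card (poly_graph p d c \<inter> poly_graph p d c') \<le> d" if "c < m" "c' < m" "c \<noteq> c'" for c c'
      using that \<open>m \<le> p ^ d\<close> \<open>prime p\<close> by (intro card_poly_graph_inter) auto
    show "length (st (p * p) m k I) \<le> m" if "set_system (p * p) m I" for I
    proof -
      have "real (length (st (p * p) m k I)) \<le> real (p * p) * real m powr (1 - 2 * \<epsilon>)"
        using storage that root by blast
      then show ?thesis using grid_storage_bound[OF assms(2,3), of p] unfolding m_def by linarith
    qed
    have "2 ^ (m + 1) * k ^ m = 2 * (2 * k) ^ m" by (simp add: power_mult_distrib)
    then show "2 ^ (m + 1) * k ^ m < fact m" using M[of m] \<open>p \<le> m\<close> p_large by simp
    show "0 \<le> C * real m powr (\<epsilon> - \<delta>) / (real k * sqrt (real k))" using \<open>C > 0\<close> by simp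
    have "real m powr (\<epsilon> - \<delta>) \<le> real p powr ((\<epsilon> - \<delta>) / \<epsilon>)"
      using floor_root_powr_le[of \<epsilon> "\<epsilon> - \<delta>" p] assms(2,5) by (simp add: m_def)
    then show "C * real m powr (\<epsilon> - \<delta>) / (real k * sqrt (real k)) * real (k * d) < real p"
      using assms(1,4,5,6) d(2) p_threshold by (intro ratio_below_threshold)
  qed
  moreover have "N \<le> m" using \<open>p \<le> m\<close> p_large by linarith
  ultimately show ?thesis using root by blast
qed

theorem mainTheorem9:
  fixes k :: nat and \<epsilon> \<delta> C :: real and N :: nat
    and st :: static_stage and dy :: dynamic_stage
  assumes "k \<ge> 1" and "0 \<le> \<epsilon>" and "\<epsilon> \<le> 1/2"
    and "\<delta> > 0" and "C > 0"
    and "coverage_oracle k st dy"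
    and "\<forall>n m I. set_system n m I \<longrightarrow> real m powr \<epsilon> \<le> sqrt (real n) \<longrightarrow>
           real (length (st n m k I)) \<le> real n * real m powr (1 - 2 * \<epsilon>)"
  shows "\<exists>n m. m \<ge> N \<and> real m powr \<epsilon> \<le> sqrt (real n) \<and>
           \<not> ratio_at_most st dy n m k (C * real m powr (\<epsilon> - \<delta>) / (real k * sqrt (real k)))"
proof (cases "\<epsilon> < \<delta>")
  case True
  then show ?thesis using small_ratio_case assms(1-3,5,6) by blast
next
  case False
  then have "0 < \<epsilon>" and "\<delta> \<le> \<epsilon>" using \<open>\<delta> > 0\<close> by simp_all
  then show ?thesis using large_ratio_case[of k \<epsilon> \<delta> C] assms by blast
qed

end
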